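(* Assume the shortest $s_0$-$s_1$ path in the Wheatstone graph is unique. Then for every choice of positive lengths and positive initial diameters, the Physarum dynamics on the Wheatstone graph stabilize: every edge either becomes horizontal or becomes directed.
   Context: The Wheatstone graph has vertices $s_0,s_1,\ell,r$ and five edges $a=\{s_0,r\}$, $b=\{s_0,\ell\}$, $c=\{r,s_1\}$, $d=\{\ell,s_1\}$, $e=\{\ell,r\}$, each with length $L_x>0$ and time-dependent diameter $D_x(t)$ with $D_x(0)>0$. Physarum dynamics: a unit electrical current is sent from $s_0$ to $s_1$ through the network with resistances $R_x=L_x/D_x$ (potentials $p_v$ solve Kirchhoff's equations with net outflow $1$ at $s_0$, $-1$ at $s_1$, $0$ elsewhere; current on edge $x=\{u,v\}$ is $(p_u-p_v)/R_x$), and $\dot D_x=|Q_x|-D_x$ for each edge $x$. An edge $\{u,v\}$ becomes horizontal if $|p_u(t)-p_v(t)|\to0$ as $t\to\infty$; it becomes directed from $u$ to $v$ if $p_u(t)>p_v(t)$ for all sufficiently large $t$. *)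

theory Defs
  imports "HOL-Analysis.Analysis"
begin

datatype wvertex = S0 | S1 | Lv | Rv
datatype wedge = Ea | Eb | Ec | Ed | Ee

definition wedges :: "wedge set" where
  "wedges = {Ea, Eb, Ec, Ed, Ee}"

text \<open>A fixed (arbitrary) orientation of each undirected edge, used only to
  define the signed current; the dynamics only depend on its absolute value.\<close>
fun ends :: "wedge \<Rightarrow> wvertex \<times> wvertex" where
  "ends Ea = (S0, Rv)"
| "ends Eb = (S0, Lv)"
| "ends Ec = (Rv, S1)"
| "ends Ed = (Lv, S1)"
| "ends Ee = (Lv, Rv)"

definition net_supply :: "wvertex \<Rightarrow> real" where
  "net_supply v = (if v = S0 then 1 else if v = S1 then -1 else 0)"

definition current :: "(wedge \<Rightarrow> real) \<Rightarrow> (wedge \<Rightarrow> real) \<Rightarrow> (wvertex \<Rightarrow> real) \<Rightarrow> wedge \<Rightarrow> real" where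
  "current L D p x = (p (fst (ends x)) - p (snd (ends x))) / (L x / D x)"

definition kirchhoff :: "(wedge \<Rightarrow> real) \<Rightarrow> (wedge \<Rightarrow> real) \<Rightarrow> (wvertex \<Rightarrow> real) \<Rightarrow> bool" where
  "kirchhoff L D p \<longleftrightarrow>
     (\<forall>v. (\<Sum>x\<in>{x\<in>wedges. fst (ends x) = v}. current L D p x)
          - (\<Sum>x\<in>{x\<in>wedges. snd (ends x) = v}. current L D p x) = net_supply v)"

text \<open>Lengths of the four simple s0-s1 paths: a c, b d, a e d, b e c.\<close>
definition path_lengths :: "(wedge \<Rightarrow> real) \<Rightarrow> real list" where
  "path_lengths L = [L Ea + L Ec, L Eb + L Ed, L Ea + L Ee + L Ed, L Eb + L Ee + L Ec]"

definition unique_shortest_path :: "(wedge \<Rightarrow> real) \<Rightarrow> bool" where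
  "unique_shortest_path L \<longleftrightarrow>
     (\<exists>i < length (path_lengths L). \<forall>j < length (path_lengths L).
         j \<noteq> i \<longrightarrow> path_lengths L ! i < path_lengths L ! j)"

definition physarum_solution ::
  "(wedge \<Rightarrow> real) \<Rightarrow> (real \<Rightarrow> wedge \<Rightarrow> real) \<Rightarrow> (real \<Rightarrow> wvertex \<Rightarrow> real) \<Rightarrow> bool" where
  "physarum_solution L D p \<longleftrightarrow>
     (\<forall>t\<ge>0. kirchhoff L (D t) (p t)) \<and>
     (\<forall>x\<in>wedges. \<forall>t\<ge>0.
        ((\<lambda>s. D s x) has_real_derivative (\<bar>current L (D t) (p t) x\<bar> - D t x)) (at t within {0..}))"

definition becomes_horizontal :: "(real \<Rightarrow> wvertex \<Rightarrow> real) \<Rightarrow> wedge \<Rightarrow> bool" where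
  "becomes_horizontal p x \<longleftrightarrow>
     ((\<lambda>t. \<bar>p t (fst (ends x)) - p t (snd (ends x))\<bar>) \<longlongrightarrow> 0) at_top"

definition directed_from :: "(real \<Rightarrow> wvertex \<Rightarrow> real) \<Rightarrow> wvertex \<Rightarrow> wvertex \<Rightarrow> bool" where
  "directed_from p u v \<longleftrightarrow> (\<forall>\<^sub>F t in at_top. p t u > p t v)"

definition becomes_directed :: "(real \<Rightarrow> wvertex \<Rightarrow> real) \<Rightarrow> wedge \<Rightarrow> bool" where
  "becomes_directed p x \<longleftrightarrow>
     directed_from p (fst (ends x)) (snd (ends x)) \<or> directed_from p (snd (ends x)) (fst (ends x))"

end

theory Submission
  imports Defs
begin

(* Write u_a = p_s0 - p_r, u_b = p_s0 - p_l, u_c = p_r - p_s1, u_d = p_l - p_s1 for the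
   potential drops of the outer edges, u_e = p_l - p_r for the drop along the bridge e,
   and g_x = D_x / L_x for the conductances.

   Solving Kirchhoff's equations shows that all outer drops are positive
      (so a, b, c, d are directed at all times), that the unit current splits between
      a, b and between c, d, that the Thomson energy is at most the total drop, and that
      u_e = P (g_b g_c - g_a g_d) / Delta with Delta >= (g_b + g_d)(g_a + g_c).
   2. These facts are collected in the locale wheatstone_dynamics.  The bridge drop has
      the sign of phi = ln (g_b g_c) - ln (g_a g_d), and a one-dimensional barrier
      argument shows that u_e is eventually signed if phi crosses zero in one direction.
   3. If L_a <= L_b and L_d <= L_c (one strictly), phi decreases through every zero.
      If L_a < L_b and L_c < L_d, a Lyapunov function shows D_b, D_d -> 0 and
      D_a, D_c -> 1; at zeros of phi its rate then tends to L_a/L_b - L_c/L_d.  When this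
      limit is 0, a "balance" quantity with derivative proportional to -u_e is trapped
      near phi and forces u_e -> 0.
   4. The mirror symmetry a <-> b, c <-> d covers all remaining length orders except
      L_a = L_b, L_c = L_d, which a unique shortest path excludes. *)

lemma negative_right_after:
  fixes f :: "real \<Rightarrow> real"
  assumes der: "(f has_real_derivative f') (at t0)" and nonpos: "f t0 \<le> 0"
    and zero: "f t0 = 0 \<Longrightarrow> f' < 0"
  shows "\<exists>d>0. \<forall>h. 0 < h \<and> h < d \<longrightarrow> f (t0 + h) < 0"
proof (cases "f t0 = 0")
  case True
  then show ?thesis using DERIV_neg_dec_right[OF der zero[OF True]] by auto
next
  case False
  then have "f t0 < 0" using nonpos by simp
  from LIM_fun_less_zero[OF DERIV_isCont[OF der, unfolded isCont_def] this]
  obtain r where "r > 0" "\<forall>x. x \<noteq> t0 \<and> \<bar>t0 - x\<bar> < r \<longrightarrow> f x < 0" by blast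
  then show ?thesis by (intro exI[of _ r]) auto
qed

lemma barrier_stays_negative:
  fixes f f' :: "real \<Rightarrow> real"
  assumes der: "\<And>t. T \<le> t \<Longrightarrow> (f has_real_derivative f' t) (at t)"
    and zero: "\<And>t. T \<le> t \<Longrightarrow> f t = 0 \<Longrightarrow> f' t < 0"
    and start: "T \<le> t0" "f t0 \<le> 0" and later: "t0 < t1"
  shows "f t1 < 0"
proof (rule ccontr)
  assume "\<not> f t1 < 0"
  then have t1: "0 \<le> f t1" by simp
  have cont: "\<And>t. T \<le> t \<Longrightarrow> isCont f t" using der DERIV_isCont by blast
  obtain d where d: "d > 0" "\<And>h. 0 < h \<Longrightarrow> h < d \<Longrightarrow> f (t0 + h) < 0"
    using negative_right_after[OF der[OF start(1)] start(2) zero[OF start(1)]] by blast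
  define s0 where "s0 = t0 + min d (t1 - t0) / 2"
  have step: "0 < min d (t1 - t0) / 2" "min d (t1 - t0) / 2 < d" "min d (t1 - t0) / 2 < t1 - t0"
    using d later by auto
  have s0: "t0 < s0" "s0 < t1" "f s0 < 0"
    using step d(2) unfolding s0_def by auto
  (* m is the first zero of f after s0 *)
  define Z where "Z = {s \<in> {s0..t1}. f s = 0}"
  have "\<exists>s. s0 \<le> s \<and> s \<le> t1 \<and> f s = 0"
    by (rule IVT) (use s0 t1 cont start in auto)
  then have Z_ne: "Z \<noteq> {}" unfolding Z_def by auto
  have "closed Z"
  proof -
    have "continuous_on {s0..t1} f"
      using cont s0 start by (intro continuous_at_imp_continuous_on) auto
    then show ?thesis unfolding Z_def by (rule continuous_closed_preimage_constant) auto
  qed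
  moreover have Z_bdd: "bdd_below Z" unfolding Z_def by (auto intro: bdd_belowI[of _ s0])
  ultimately have "Inf Z \<in> Z" using closed_contains_Inf Z_ne by blast
  define m where "m = Inf Z"
  have m: "s0 < m" "f m = 0" "T \<le> m"
    using \<open>Inf Z \<in> Z\<close> s0 start unfolding m_def Z_def by (auto simp: order.order_iff_strict)
  have before: "f s < 0" if s: "s0 \<le> s" "s < m" for s
  proof (rule ccontr)
    assume "\<not> f s < 0"
    moreover have "\<forall>x. s0 \<le> x \<and> x \<le> s \<longrightarrow> isCont f x"
      using cont s0 start by auto
    ultimately obtain z where "s0 \<le> z" "z \<le> s" "f z = 0"
      using IVT[of f s0 0 s] s0 s by auto
    then have "z \<in> Z" using s \<open>Inf Z \<in> Z\<close> unfolding m_def Z_def by auto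
    then have "m \<le> z" unfolding m_def by (rule cInf_lower[OF _ Z_bdd])
    then show False using \<open>z \<le> s\<close> \<open>s < m\<close> by simp
  qed
  obtain d' where d': "d' > 0" "\<forall>h>0. h < d' \<longrightarrow> f m < f (m - h)"
    using DERIV_neg_dec_left[OF der[OF m(3)] zero[OF m(3) m(2)]] by blast
  define h where "h = min d' (m - s0) / 2"
  have h: "0 < h" "h < d'" "h < m - s0" using d' m unfolding h_def by auto
  have "f m < f (m - h)" using d' h by auto
  moreover have "f (m - h) < 0" using h by (intro before) auto
  ultimately show False using m by simp
qed

lemma eventually_sign_if_decreasing_at_zeros:
  fixes f f' :: "real \<Rightarrow> real"
  assumes der: "\<And>t. T \<le> t \<Longrightarrow> (f has_real_derivative f' t) (at t)"
    and zero: "\<And>t. T \<le> t \<Longrightarrow> f t = 0 \<Longrightarrow> f' t < 0"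
  shows "(\<forall>\<^sub>F t in at_top. f t > 0) \<or> (\<forall>\<^sub>F t in at_top. f t < 0)"
proof (cases "\<forall>t\<ge>T. f t > 0")
  case True
  then show ?thesis unfolding eventually_at_top_linorder by blast
next
  case False
  then obtain t0 where "T \<le> t0" "f t0 \<le> 0" by (auto simp: not_less)
  then have "\<forall>t\<ge>t0 + 1. f t < 0"
    using barrier_stays_negative[OF der zero] by simp
  then show ?thesis unfolding eventually_at_top_linorder by blast
qed

lemma eventually_sign_if_fixed_crossing:
  fixes f f' :: "real \<Rightarrow> real"
  assumes der: "\<And>t. T \<le> t \<Longrightarrow> (f has_real_derivative f' t) (at t)"
    and crossing: "(\<forall>t\<ge>T. f t = 0 \<longrightarrow> f' t < 0) \<or> (\<forall>t\<ge>T. f t = 0 \<longrightarrow> f' t > 0)"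
  shows "(\<forall>\<^sub>F t in at_top. f t > 0) \<or> (\<forall>\<^sub>F t in at_top. f t < 0)"
  using crossing
proof
  assume "\<forall>t\<ge>T. f t = 0 \<longrightarrow> f' t < 0"
  then show ?thesis using eventually_sign_if_decreasing_at_zeros[OF der] by blast
next
  assume "\<forall>t\<ge>T. f t = 0 \<longrightarrow> f' t > 0"
  then have "(\<forall>\<^sub>F t in at_top. - f t > 0) \<or> (\<forall>\<^sub>F t in at_top. - f t < 0)"
    using eventually_sign_if_decreasing_at_zeros[of T "\<lambda>t. - f t" "\<lambda>t. - f' t"] der
    by (auto intro: DERIV_minus)
  then show ?thesis by auto
qed

lemma tendsto_zero_if_pushed_back:
  fixes Y Y' :: "real \<Rightarrow> real"
  assumes der: "\<And>t. T \<le> t \<Longrightarrow> (Y has_real_derivative Y' t) (at t)"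
    and push: "\<And>eta. 0 < eta \<Longrightarrow>
       \<forall>\<^sub>F t in at_top. (Y t = eta \<longrightarrow> Y' t < 0) \<and> (Y t = - eta \<longrightarrow> Y' t > 0)"
    and below: "\<And>eta N. 0 < eta \<Longrightarrow> \<exists>t\<ge>N. Y t \<le> eta"
    and above: "\<And>eta N. 0 < eta \<Longrightarrow> \<exists>t\<ge>N. - eta \<le> Y t"
  shows "(Y \<longlongrightarrow> 0) at_top"
  unfolding tendsto_iff dist_real_def
proof (intro allI impI)
  fix eta :: real assume eta: "0 < eta"
  obtain N where N: "\<And>t. N \<le> t \<Longrightarrow> (Y t = eta \<longrightarrow> Y' t < 0) \<and> (Y t = - eta \<longrightarrow> Y' t > 0)"
    using push[OF eta] unfolding eventually_at_top_linorder by blast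
  define T1 where "T1 = max N T"
  have der1: "\<And>t. T1 \<le> t \<Longrightarrow> (Y has_real_derivative Y' t) (at t)"
    using der unfolding T1_def by simp
  obtain t1 where t1: "T1 \<le> t1" "Y t1 \<le> eta" using below[OF eta] by blast
  obtain t2 where t2: "T1 \<le> t2" "- eta \<le> Y t2" using above[OF eta] by blast
  have upper: "Y t - eta < 0" if "t1 < t" for t
  proof (rule barrier_stays_negative[where f = "\<lambda>s. Y s - eta" and f' = Y' and T = T1])
    show "((\<lambda>s. Y s - eta) has_real_derivative Y' s) (at s)" if "T1 \<le> s" for s
      using DERIV_diff[OF der1[OF that] DERIV_const] by simp
    show "Y' s < 0" if "T1 \<le> s" "Y s - eta = 0" for s
      using N[of s] that unfolding T1_def by simp
  qed (use t1 that in auto)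
  have lower: "- Y t - eta < 0" if "t2 < t" for t
  proof (rule barrier_stays_negative[where f = "\<lambda>s. - Y s - eta" and f' = "\<lambda>s. - Y' s" and T = T1])
    show "((\<lambda>s. - Y s - eta) has_real_derivative - Y' s) (at s)" if "T1 \<le> s" for s
      using DERIV_diff[OF DERIV_minus[OF der1[OF that]] DERIV_const] by simp
    show "- Y' s < 0" if "T1 \<le> s" "- Y s - eta = 0" for s
      using N[of s] that unfolding T1_def by simp
  qed (use t2 that in auto)
  have "\<bar>Y t - 0\<bar> < eta" if "max t1 t2 + 1 \<le> t" for t
  proof -
    have "t1 < t" "t2 < t" using that by linarith+
    then show ?thesis using upper[of t] lower[of t] by (simp add: abs_less_iff)
  qed
  then show "\<forall>\<^sub>F t in at_top. \<bar>Y t - 0\<bar> < eta"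
    unfolding eventually_at_top_linorder by blast
qed

lemma DERIV_ln_of_rate:
  fixes x :: "real \<Rightarrow> real"
  assumes "(x has_real_derivative x t * v) (at t)" "0 < x t"
  shows "((\<lambda>s. ln (x s)) has_real_derivative v) (at t)"
proof -
  have "((\<lambda>s. ln (x s)) has_real_derivative (1 / x t) * (x t * v)) (at t)"
    by (rule DERIV_chain2[OF DERIV_ln_divide assms(1)]) (use assms in simp)
  then show ?thesis using assms by simp
qed

lemma relaxation_solution:
  fixes f :: "real \<Rightarrow> real"
  assumes der: "\<And>s. 0 < s \<Longrightarrow> (f has_real_derivative 1 - f s) (at s)"
    and t: "0 < t0" "t0 \<le> t"
  shows "f t = 1 + (f t0 - 1) * exp (t0 - t)"
proof -
  define g where "g s = exp s * (f s - 1)" for s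
  have g_der: "(g has_real_derivative 0) (at s)" if "0 < s" for s
  proof -
    have "(g has_real_derivative exp s * (f s - 1) + (1 - f s - 0) * exp s) (at s)"
      unfolding g_def by (intro DERIV_mult DERIV_exp DERIV_diff der that DERIV_const)
    then show ?thesis by (simp add: algebra_simps)
  qed
  have "g t = g t0"
  proof (cases "t = t0")
    case False
    then have "t0 < t" using t by simp
    moreover have "continuous_on {t0..t} g"
      using t by (intro continuous_at_imp_continuous_on ballI DERIV_isCont[OF g_der]) auto
    ultimately show ?thesis by (rule DERIV_isconst2[of t0 t g t]) (use g_der t in auto)
  qed simp
  then have "f t - 1 = (f t0 - 1) * (exp t0 / exp t)" unfolding g_def by (simp add: field_simps)
  then show ?thesis by (simp add: exp_diff)
qed

lemma relaxation_tendsto: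
  fixes f :: "real \<Rightarrow> real"
  assumes der: "\<And>s. 0 < s \<Longrightarrow> (f has_real_derivative 1 - f s) (at s)"
  shows "(f \<longlongrightarrow> 1) at_top"
proof -
  have "((\<lambda>t::real. inverse (exp t)) \<longlongrightarrow> 0) at_top"
    by (rule tendsto_inverse_0_at_top) (rule exp_at_top)
  then have "((\<lambda>t::real. exp (1::real) * inverse (exp t)) \<longlongrightarrow> exp 1 * 0) at_top"
    by (intro tendsto_mult tendsto_const)
  then have "((\<lambda>t. 1 + (f 1 - 1) * exp (1 - t)) \<longlongrightarrow> 1 + (f 1 - 1) * 0) at_top"
    by (intro tendsto_intros) (simp add: exp_diff field_simps)
  moreover have "\<forall>\<^sub>F t in at_top. 1 + (f 1 - 1) * exp (1 - t) = f t"
    using eventually_ge_at_top[of 1]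
    by eventually_elim (rule relaxation_solution[OF der, symmetric], auto)
  ultimately show ?thesis by (simp add: Lim_transform_eventually)
qed

lemma relaxation_bounded:
  fixes f :: "real \<Rightarrow> real"
  assumes der: "\<And>s. 0 < s \<Longrightarrow> (f has_real_derivative 1 - f s) (at s)" and t: "1 \<le> t"
  shows "f t \<le> 1 + \<bar>f 1 - 1\<bar>"
proof -
  have "(f 1 - 1) * exp (1 - t) \<le> \<bar>f 1 - 1\<bar> * 1"
    using t by (intro mult_mono abs_ge_self) auto
  then show ?thesis using relaxation_solution[OF der _ t] by simp
qed

lemma DERIV_at_from_within_nonneg:
  fixes f :: "real \<Rightarrow> real"
  assumes "(f has_real_derivative d) (at s within {0..})" "0 < s"
  shows "(f has_real_derivative d) (at s)"
proof -
  have "(f has_real_derivative d) (at s within {0<..})" by (rule DERIV_subset[OF assms(1)]) auto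
  moreover have "at s within {0<..} = at s" by (rule at_within_open) (use assms in auto)
  ultimately show ?thesis by simp
qed

(* Growth with a non-negative source, f' = g - f with g >= 0, preserves positivity:
   exp t * f t is non-decreasing. *)
lemma positive_under_sourced_decay:
  fixes f g :: "real \<Rightarrow> real"
  assumes der: "\<And>s. 0 \<le> s \<Longrightarrow> (f has_real_derivative g s - f s) (at s within {0..})"
    and source: "\<And>s. 0 \<le> s \<Longrightarrow> 0 \<le> g s" and f0: "0 < f 0" and t: "0 \<le> t"
  shows "0 < f t"
proof -
  define h where "h s = exp s * f s" for s
  have h_der: "(h has_real_derivative exp s * f s + (g s - f s) * exp s) (at s within {0..})"
    if "0 \<le> s" for s
    unfolding h_def by (rule DERIV_mult[OF has_field_derivative_at_within[OF DERIV_exp] der[OF that]])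
  have "h 0 \<le> h t"
  proof (rule DERIV_nonneg_imp_increasing_open[OF t])
    fix x assume x: "0 < x" "x < t"
    have "(h has_real_derivative exp x * f x + (g x - f x) * exp x) (at x)"
      by (rule DERIV_at_from_within_nonneg[OF h_der]) (use x in auto)
    moreover have "0 \<le> exp x * f x + (g x - f x) * exp x"
      using source[of x] x by (simp add: algebra_simps)
    ultimately show "\<exists>y. (h has_real_derivative y) (at x) \<and> 0 \<le> y" by blast
  next
    have "continuous (at s within {0..}) h" if "0 \<le> s" for s
      using h_der[OF that] by (rule DERIV_continuous)
    then have "continuous_on {0..} h" by (simp add: continuous_on_eq_continuous_within)
    then show "continuous_on {0..t} h" by (rule continuous_on_subset) auto
  qed
  then have "0 < exp t * f t" using f0 unfolding h_def by simp
  then show ?thesis by (simp add: zero_less_mult_iff)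
qed

lemma weighted_amgm:
  fixes L x u :: real
  assumes "0 < L" "0 \<le> x"
  shows "2 * (x * u) \<le> L * x + x * u\<^sup>2 / L"
proof -
  have "0 \<le> x * (L - u)\<^sup>2 / L" using assms by simp
  moreover have "x * (L - u)\<^sup>2 / L = L * x - 2 * (x * u) + x * u\<^sup>2 / L"
    using assms by (simp add: field_simps power2_eq_square)
  ultimately show ?thesis by linarith
qed

lemma sum_over_wedges:
  "(\<Sum>x\<in>{x\<in>wedges. Q x}. f x) =
     (if Q Ea then f Ea else 0) + (if Q Eb then f Eb else 0) + (if Q Ec then f Ec else 0)
     + (if Q Ed then f Ed else 0) + (if Q Ee then f Ee else 0)"
  unfolding wedges_def by (subst sum.inter_filter) (auto simp: add.assoc)

lemma current_conductance:
  "current L D p x = D x / L x * (p (fst (ends x)) - p (snd (ends x)))"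
  unfolding current_def by simp

(* Kirchhoff's equations at s0, l and r in terms of conductances (the equation at s1
   is a consequence of the other three). *)
lemma kirchhoff_node_equations:
  assumes "kirchhoff L D p"
  shows "D Ea / L Ea * (p S0 - p Rv) + D Eb / L Eb * (p S0 - p Lv) = 1"
    and "D Ed / L Ed * (p Lv - p S1) + D Ee / L Ee * (p Lv - p Rv) - D Eb / L Eb * (p S0 - p Lv) = 0"
    and "D Ec / L Ec * (p Rv - p S1) - D Ea / L Ea * (p S0 - p Rv) - D Ee / L Ee * (p Lv - p Rv) = 0"
proof -
  have node: "(\<Sum>x\<in>{x\<in>wedges. fst (ends x) = v}. current L D p x)
          - (\<Sum>x\<in>{x\<in>wedges. snd (ends x) = v}. current L D p x) = net_supply v" for v
    using assms unfolding kirchhoff_def by blast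
  show "D Ea / L Ea * (p S0 - p Rv) + D Eb / L Eb * (p S0 - p Lv) = 1"
    using node[of S0] unfolding sum_over_wedges current_conductance by (simp add: net_supply_def)
  show "D Ed / L Ed * (p Lv - p S1) + D Ee / L Ee * (p Lv - p Rv) - D Eb / L Eb * (p S0 - p Lv) = 0"
    using node[of Lv] unfolding sum_over_wedges current_conductance by (simp add: net_supply_def)
  show "D Ec / L Ec * (p Rv - p S1) - D Ea / L Ea * (p S0 - p Rv) - D Ee / L Ee * (p Lv - p Rv) = 0"
    using node[of Rv] unfolding sum_over_wedges current_conductance by (simp add: net_supply_def)
qed

(* The determinant of the reduced Laplacian of the Wheatstone network with
   conductances ga, ..., ge (rows/columns l and r). *)
definition wheatstone_det :: "real \<Rightarrow> real \<Rightarrow> real \<Rightarrow> real \<Rightarrow> real \<Rightarrow> real" where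
  "wheatstone_det ga gb gc gd ge = (gb + gd + ge) * (ga + gc + ge) - ge\<^sup>2"

lemma wheatstone_det_expand:
  "wheatstone_det ga gb gc gd ge = (gb + gd) * (ga + gc) + ge * (ga + gb + gc + gd)"
  unfolding wheatstone_det_def by (simp add: algebra_simps power2_eq_square)

lemma wheatstone_det_bound:
  assumes "0 < ga" "0 < gb" "0 < gc" "0 < gd" "0 < ge"
  shows "0 < wheatstone_det ga gb gc gd ge"
    and "(gb + gd) * (ga + gc) \<le> wheatstone_det ga gb gc gd ge"
  using assms unfolding wheatstone_det_expand by (auto intro!: add_pos_pos mult_pos_pos)

context
  fixes ga gb gc gd ge p0 p1 pl pr :: real
  assumes g_pos: "0 < ga" "0 < gb" "0 < gc" "0 < gd" "0 < ge"
    and node_s0: "ga * (p0 - pr) + gb * (p0 - pl) = 1"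
    and node_l: "gd * (pl - p1) + ge * (pl - pr) - gb * (p0 - pl) = 0"
    and node_r: "gc * (pr - p1) - ga * (p0 - pr) - ge * (pl - pr) = 0"
begin

(* Cramer's rule for the potentials of l and r relative to s1. *)
lemma wheatstone_potentials:
  defines "\<Delta> \<equiv> wheatstone_det ga gb gc gd ge"
  shows "\<Delta> * (pl - p1) = (p0 - p1) * (gb * (ga + gc + ge) + ge * ga)"
    and "\<Delta> * (pr - p1) = (p0 - p1) * (ga * (gb + gd + ge) + ge * gb)"
proof -
  have l: "(gb + gd + ge) * (pl - p1) - ge * (pr - p1) - gb * (p0 - p1) = 0"
    using node_l by (simp add: algebra_simps)
  have r: "- ge * (pl - p1) + (ga + gc + ge) * (pr - p1) - ga * (p0 - p1) = 0"
    using node_r by (simp add: algebra_simps)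
  have "(ga + gc + ge) * ((gb + gd + ge) * (pl - p1) - ge * (pr - p1) - gb * (p0 - p1))
      + ge * (- ge * (pl - p1) + (ga + gc + ge) * (pr - p1) - ga * (p0 - p1)) = 0"
    using l r by simp
  then show "\<Delta> * (pl - p1) = (p0 - p1) * (gb * (ga + gc + ge) + ge * ga)"
    unfolding \<Delta>_def wheatstone_det_def by (simp add: algebra_simps power2_eq_square)
  have "ge * ((gb + gd + ge) * (pl - p1) - ge * (pr - p1) - gb * (p0 - p1))
      + (gb + gd + ge) * (- ge * (pl - p1) + (ga + gc + ge) * (pr - p1) - ga * (p0 - p1)) = 0"
    using l r by simp
  then show "\<Delta> * (pr - p1) = (p0 - p1) * (ga * (gb + gd + ge) + ge * gb)"
    unfolding \<Delta>_def wheatstone_det_def by (simp add: algebra_simps power2_eq_square)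
qed

lemma wheatstone_drops_pos:
  shows "0 < p0 - pr" and "0 < p0 - pl" and "0 < pr - p1" and "0 < pl - p1"
proof -
  define \<Delta> where "\<Delta> = wheatstone_det ga gb gc gd ge"
  define X where "X = p0 - p1"
  have \<Delta>_pos: "0 < \<Delta>" unfolding \<Delta>_def using wheatstone_det_bound g_pos by blast
  note pot = wheatstone_potentials[folded \<Delta>_def X_def]
  have r: "\<Delta> * (p0 - pr) = X * (gc * (gb + gd + ge) + ge * gd)"
    using pot(2) unfolding \<Delta>_def wheatstone_det_def X_def by (simp add: algebra_simps power2_eq_square)
  have l: "\<Delta> * (p0 - pl) = X * (gd * (ga + gc + ge) + ge * gc)"
    using pot(1) unfolding \<Delta>_def wheatstone_det_def X_def by (simp add: algebra_simps power2_eq_square)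
  have "\<Delta> = \<Delta> * (ga * (p0 - pr) + gb * (p0 - pl))"
    using node_s0 by simp
  also have "\<dots> = ga * (\<Delta> * (p0 - pr)) + gb * (\<Delta> * (p0 - pl))"
    by (simp add: algebra_simps)
  also have "\<dots> = X * (ga * (gc * (gb + gd + ge) + ge * gd) + gb * (gd * (ga + gc + ge) + ge * gc))"
    unfolding r l by (simp add: algebra_simps)
  finally have "0 < X * (ga * (gc * (gb + gd + ge) + ge * gd) + gb * (gd * (ga + gc + ge) + ge * gc))"
    using \<Delta>_pos by simp
  moreover have "0 < ga * (gc * (gb + gd + ge) + ge * gd) + gb * (gd * (ga + gc + ge) + ge * gc)"
    using g_pos by (intro add_pos_pos mult_pos_pos) auto
  ultimately have X_pos: "0 < X" by (simp add: zero_less_mult_iff)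
  have "0 < \<Delta> * (p0 - pr)" "0 < \<Delta> * (p0 - pl)" "0 < \<Delta> * (pr - p1)" "0 < \<Delta> * (pl - p1)"
    unfolding r l pot using X_pos g_pos by (auto intro!: mult_pos_pos add_pos_pos)
  then show "0 < p0 - pr" "0 < p0 - pl" "0 < pr - p1" "0 < pl - p1"
    using \<Delta>_pos by (simp_all add: zero_less_mult_iff)
qed

lemma wheatstone_sink: "gc * (pr - p1) + gd * (pl - p1) = 1"
  using node_s0 node_l node_r by (simp add: algebra_simps)

lemma wheatstone_bridge:
  "(pl - pr) * wheatstone_det ga gb gc gd ge = (p0 - p1) * (gb * gc - ga * gd)"
  using wheatstone_potentials by (simp add: algebra_simps)

lemma wheatstone_energy:
  "ga * (p0 - pr)\<^sup>2 + gb * (p0 - pl)\<^sup>2 + gc * (pr - p1)\<^sup>2 + gd * (pl - p1)\<^sup>2 \<le> p0 - p1"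
proof -
  have "ga * (p0 - pr)\<^sup>2 + gb * (p0 - pl)\<^sup>2 + gc * (pr - p1)\<^sup>2 + gd * (pl - p1)\<^sup>2 + ge * (pl - pr)\<^sup>2
      = p0 * (ga * (p0 - pr) + gb * (p0 - pl)) + pl * (gd * (pl - p1) + ge * (pl - pr) - gb * (p0 - pl))
        + pr * (gc * (pr - p1) - ga * (p0 - pr) - ge * (pl - pr)) - p1 * (gc * (pr - p1) + gd * (pl - p1))"
    by (simp add: algebra_simps power2_eq_square)
  also have "\<dots> = p0 - p1" using node_s0 node_l node_r wheatstone_sink by simp
  finally show ?thesis using g_pos by (smt (verit) mult_nonneg_nonneg zero_le_power2)
qed

end

(* The Physarum dynamics on the Wheatstone graph, abstracted to the quantities the
   stability argument uses: lengths La..Ld, diameters Da..Dd and potential drops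
   ua..ud of the outer edges, the drop ue = p_l - p_r along the bridge, the total
   drop P and the reciprocal w of the network determinant.  The length Le and the
   diameter De of the bridge enter only through w. *)
locale wheatstone_dynamics =
  fixes La Lb Lc Ld :: real
    and Da Db Dc Dd ua ub uc ud ue P w :: "real \<Rightarrow> real"
  assumes L_pos: "0 < La" "0 < Lb" "0 < Lc" "0 < Ld"
    and D_pos: "\<And>t. 0 < t \<Longrightarrow> 0 < Da t" "\<And>t. 0 < t \<Longrightarrow> 0 < Db t"
               "\<And>t. 0 < t \<Longrightarrow> 0 < Dc t" "\<And>t. 0 < t \<Longrightarrow> 0 < Dd t"
    and u_pos: "\<And>t. 0 < t \<Longrightarrow> 0 < ua t" "\<And>t. 0 < t \<Longrightarrow> 0 < ub t"
               "\<And>t. 0 < t \<Longrightarrow> 0 < uc t" "\<And>t. 0 < t \<Longrightarrow> 0 < ud t"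
    and P_ac: "\<And>t. 0 < t \<Longrightarrow> P t = ua t + uc t"
    and P_bd: "\<And>t. 0 < t \<Longrightarrow> P t = ub t + ud t"
    and ue_eq: "\<And>t. 0 < t \<Longrightarrow> ue t = ua t - ub t"
    and flow_in: "\<And>t. 0 < t \<Longrightarrow> Da t * ua t / La + Db t * ub t / Lb = 1"
    and flow_out: "\<And>t. 0 < t \<Longrightarrow> Dc t * uc t / Lc + Dd t * ud t / Ld = 1"
    and energy: "\<And>t. 0 < t \<Longrightarrow> Da t * (ua t)\<^sup>2 / La + Db t * (ub t)\<^sup>2 / Lb
                   + Dc t * (uc t)\<^sup>2 / Lc + Dd t * (ud t)\<^sup>2 / Ld \<le> P t"
    and w_pos: "\<And>t. 0 < t \<Longrightarrow> 0 < w t"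
    and ue_formula: "\<And>t. 0 < t \<Longrightarrow>
          ue t = P t * ((Db t / Lb) * (Dc t / Lc) - (Da t / La) * (Dd t / Ld)) * w t"
    and w_bound: "\<And>t. 0 < t \<Longrightarrow> w t * ((Db t / Lb + Dd t / Ld) * (Da t / La + Dc t / Lc)) \<le> 1"
    and growth_a: "\<And>t. 0 < t \<Longrightarrow> (Da has_real_derivative Da t * (ua t / La - 1)) (at t)"
    and growth_b: "\<And>t. 0 < t \<Longrightarrow> (Db has_real_derivative Db t * (ub t / Lb - 1)) (at t)"
    and growth_c: "\<And>t. 0 < t \<Longrightarrow> (Dc has_real_derivative Dc t * (uc t / Lc - 1)) (at t)"
    and growth_d: "\<And>t. 0 < t \<Longrightarrow> (Dd has_real_derivative Dd t * (ud t / Ld - 1)) (at t)"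
begin

(* The logarithmic cross ratio of the conductances; it has the sign of the bridge drop. *)
definition phi :: "real \<Rightarrow> real" where
  "phi t = ln (Db t / Lb) + ln (Dc t / Lc) - ln (Da t / La) - ln (Dd t / Ld)"

definition phi_rate :: "real \<Rightarrow> real" where
  "phi_rate t = ub t / Lb + uc t / Lc - ua t / La - ud t / Ld"

lemma phi_der:
  assumes t: "0 < t" shows "(phi has_real_derivative phi_rate t) (at t)"
proof -
  have scaled: "((\<lambda>s. x s / L) has_real_derivative (x t / L) * v) (at t)"
    if "(x has_real_derivative x t * v) (at t)" for x :: "real \<Rightarrow> real" and L v
    using DERIV_cdivide[OF that, of L] by simp
  have "(phi has_real_derivative
      (ub t / Lb - 1) + (uc t / Lc - 1) - (ua t / La - 1) - (ud t / Ld - 1)) (at t)"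
    unfolding phi_def[abs_def]
    by (intro DERIV_diff DERIV_add DERIV_ln_of_rate scaled growth_a growth_b growth_c growth_d
        divide_pos_pos D_pos L_pos t)
  then show ?thesis unfolding phi_rate_def by (rule DERIV_cong) simp
qed

lemma phi_as_ln_ratio:
  assumes t: "0 < t"
  shows "phi t = ln ((Db t / Lb) * (Dc t / Lc)) - ln ((Da t / La) * (Dd t / Ld))"
  unfolding phi_def using D_pos[OF t] L_pos by (simp add: ln_mult ln_div)

lemma ue_sign:
  assumes t: "0 < t"
  shows "(0 < ue t \<longleftrightarrow> 0 < phi t) \<and> (ue t < 0 \<longleftrightarrow> phi t < 0)"
proof -
  define G where "G = (Db t / Lb) * (Dc t / Lc)"
  define H where "H = (Da t / La) * (Dd t / Ld)"
  have GH: "0 < G" "0 < H" unfolding G_def H_def using D_pos[OF t] L_pos by simp_all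
  define c where "c = P t * w t"
  have c: "0 < c" unfolding c_def using P_ac[OF t] u_pos[OF t] w_pos[OF t] by simp
  have "ue t = c * (G - H)"
    unfolding c_def G_def H_def using ue_formula[OF t] by (simp add: algebra_simps)
  moreover have "phi t = ln G - ln H" unfolding G_def H_def by (rule phi_as_ln_ratio[OF t])
  ultimately show ?thesis
    using GH mult_less_cancel_left_pos[OF c, of 0 "G - H"] mult_less_cancel_left_pos[OF c, of "G - H" 0]
    by simp
qed

lemma ue_eventually_signed_if_phi:
  assumes "(\<forall>\<^sub>F t in at_top. phi t > 0) \<or> (\<forall>\<^sub>F t in at_top. phi t < 0)"
  shows "(\<forall>\<^sub>F t in at_top. ue t > 0) \<or> (\<forall>\<^sub>F t in at_top. ue t < 0)"
proof -
  have signs: "\<forall>\<^sub>F t in at_top. (0 < ue t \<longleftrightarrow> 0 < phi t) \<and> (ue t < 0 \<longleftrightarrow> phi t < 0)"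
    using eventually_gt_at_top[of 0] by eventually_elim (rule ue_sign)
  from assms show ?thesis
  proof
    assume "\<forall>\<^sub>F t in at_top. phi t > 0"
    with signs have "\<forall>\<^sub>F t in at_top. ue t > 0" by eventually_elim simp
    then show ?thesis ..
  next
    assume "\<forall>\<^sub>F t in at_top. phi t < 0"
    with signs have "\<forall>\<^sub>F t in at_top. ue t < 0" by eventually_elim simp
    then show ?thesis ..
  qed
qed

(* At a zero of phi both pairs of parallel outer edges carry equal drops, so the
   drops are determined by the diameters and so is phi_rate. *)
lemma phi_rate_at_zero:
  assumes t: "0 < t" and zero: "phi t = 0"
  shows "phi_rate t = (1/Lb - 1/La) / (Da t / La + Db t / Lb) + (1/Lc - 1/Ld) / (Dc t / Lc + Dd t / Ld)"
proof -
  have "ue t = 0" using ue_sign[OF t] zero by (simp add: order.eq_iff not_less[symmetric])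
  then have ab: "ua t = ub t" and cd: "uc t = ud t"
    using ue_eq[OF t] P_ac[OF t] P_bd[OF t] by simp_all
  have pos: "0 < Da t / La + Db t / Lb" "0 < Dc t / Lc + Dd t / Ld"
    using D_pos[OF t] L_pos by (simp_all add: add_pos_pos)
  have "ua t * (Da t / La + Db t / Lb) = 1" using flow_in[OF t] ab by (simp add: algebra_simps)
  then have ua: "ua t = 1 / (Da t / La + Db t / Lb)" using pos by (simp add: field_simps)
  have "uc t * (Dc t / Lc + Dd t / Ld) = 1" using flow_out[OF t] cd by (simp add: algebra_simps)
  then have uc: "uc t = 1 / (Dc t / Lc + Dd t / Ld)" using pos by (simp add: field_simps)
  have "phi_rate t = ua t * (1/Lb - 1/La) + uc t * (1/Lc - 1/Ld)"
    unfolding phi_rate_def using ab cd by (simp add: algebra_simps)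
  then show ?thesis unfolding ua uc by simp
qed

lemma ue_eventually_signed_if_crossing:
  assumes "0 < T"
    and "(\<forall>t\<ge>T. phi t = 0 \<longrightarrow> phi_rate t < 0) \<or> (\<forall>t\<ge>T. phi t = 0 \<longrightarrow> phi_rate t > 0)"
  shows "(\<forall>\<^sub>F t in at_top. ue t > 0) \<or> (\<forall>\<^sub>F t in at_top. ue t < 0)"
  using assms phi_der by (intro ue_eventually_signed_if_phi eventually_sign_if_fixed_crossing) auto

lemma ue_eventually_signed_ad_shorter:
  assumes "La \<le> Lb" "Ld \<le> Lc" "La < Lb \<or> Ld < Lc"
  shows "(\<forall>\<^sub>F t in at_top. ue t > 0) \<or> (\<forall>\<^sub>F t in at_top. ue t < 0)"
proof (rule ue_eventually_signed_if_crossing[of 1])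
  have "phi_rate t < 0" if t: "1 \<le> t" "phi t = 0" for t
  proof -
    have t0: "0 < t" using t by simp
    have num: "1/Lb - 1/La \<le> 0" "1/Lc - 1/Ld \<le> 0" "1/Lb - 1/La < 0 \<or> 1/Lc - 1/Ld < 0"
      using assms L_pos by (auto simp: frac_le frac_less2)
    have den: "0 < Da t / La + Db t / Lb" "0 < Dc t / Lc + Dd t / Ld"
      using D_pos[OF t0] L_pos by (simp_all add: add_pos_pos)
    show ?thesis unfolding phi_rate_at_zero[OF t0 t(2)]
      using num den by (auto simp: divide_nonpos_pos divide_neg_pos add_neg_nonpos add_nonpos_neg)
  qed
  then show "(\<forall>t\<ge>1. phi t = 0 \<longrightarrow> phi_rate t < 0) \<or> (\<forall>t\<ge>1. phi t = 0 \<longrightarrow> phi_rate t > 0)"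
    by auto
qed simp

lemma ue_bound:
  assumes t: "0 < t" shows "\<bar>ue t\<bar> \<le> P t * \<bar>exp (phi t) - 1\<bar>"
proof -
  define G where "G = (Db t / Lb) * (Dc t / Lc)"
  define H where "H = (Da t / La) * (Dd t / Ld)"
  have GH: "0 < G" "0 < H" unfolding G_def H_def using D_pos[OF t] L_pos by simp_all
  have "exp (phi t) = G / H"
    unfolding phi_as_ln_ratio[OF t, folded G_def H_def] exp_diff using GH by simp
  then have ue: "ue t = P t * w t * H * (exp (phi t) - 1)"
    unfolding ue_formula[OF t, folded G_def H_def] using GH by (simp add: field_simps)
  have "H \<le> (Db t / Lb + Dd t / Ld) * (Da t / La + Dc t / Lc)"
    unfolding H_def using D_pos[OF t] L_pos by (subst mult.commute, intro mult_mono) auto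
  then have "w t * H \<le> w t * ((Db t / Lb + Dd t / Ld) * (Da t / La + Dc t / Lc))"
    using w_pos[OF t] by (intro mult_left_mono) auto
  then have wH: "w t * H \<le> 1" using w_bound[OF t] by linarith
  have P: "0 < P t" using P_ac[OF t] u_pos[OF t] by simp
  have "\<bar>ue t\<bar> = P t * \<bar>exp (phi t) - 1\<bar> * (w t * H)"
    unfolding ue using P w_pos[OF t] GH by (simp add: abs_mult)
  also have "\<dots> \<le> P t * \<bar>exp (phi t) - 1\<bar> * 1"
    by (rule mult_left_mono[OF wH]) (use P in simp)
  finally show ?thesis by simp
qed

lemma currents_le_one:
  assumes t: "0 < t"
  shows "Da t * ua t / La \<le> 1" "Db t * ub t / Lb \<le> 1" "Dc t * uc t / Lc \<le> 1" "Dd t * ud t / Ld \<le> 1"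
proof -
  have "0 \<le> Da t * ua t / La" "0 \<le> Db t * ub t / Lb" "0 \<le> Dc t * uc t / Lc" "0 \<le> Dd t * ud t / Ld"
    using D_pos[OF t] u_pos[OF t] L_pos by simp_all
  then show "Da t * ua t / La \<le> 1" "Db t * ub t / Lb \<le> 1" "Dc t * uc t / Lc \<le> 1" "Dd t * ud t / Ld \<le> 1"
    using flow_in[OF t] flow_out[OF t] by linarith+
qed

(* Since the unit current is split between a and b (and between c and d), the sums
   of the parallel diameters relax to 1. *)
lemma parallel_sums_relax:
  assumes s: "0 < s"
  shows "((\<lambda>s. Da s + Db s) has_real_derivative 1 - (Da s + Db s)) (at s)"
    and "((\<lambda>s. Dc s + Dd s) has_real_derivative 1 - (Dc s + Dd s)) (at s)"
proof -
  have "((\<lambda>s. Da s + Db s) has_real_derivative Da s * (ua s / La - 1) + Db s * (ub s / Lb - 1)) (at s)"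
    by (intro DERIV_add growth_a growth_b s)
  moreover have "Da s * (ua s / La - 1) + Db s * (ub s / Lb - 1) = 1 - (Da s + Db s)"
    using flow_in[OF s] by (simp add: algebra_simps)
  ultimately show "((\<lambda>s. Da s + Db s) has_real_derivative 1 - (Da s + Db s)) (at s)" by simp
  have "((\<lambda>s. Dc s + Dd s) has_real_derivative Dc s * (uc s / Lc - 1) + Dd s * (ud s / Ld - 1)) (at s)"
    by (intro DERIV_add growth_c growth_d s)
  moreover have "Dc s * (uc s / Lc - 1) + Dd s * (ud s / Ld - 1) = 1 - (Dc s + Dd s)"
    using flow_out[OF s] by (simp add: algebra_simps)
  ultimately show "((\<lambda>s. Dc s + Dd s) has_real_derivative 1 - (Dc s + Dd s)) (at s)" by simp
qed

definition D_max :: real where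
  "D_max = 1 + \<bar>Da 1 + Db 1 - 1\<bar> + \<bar>Dc 1 + Dd 1 - 1\<bar>"

lemma D_le_D_max:
  assumes t: "1 \<le> t"
  shows "Da t \<le> D_max" "Db t \<le> D_max" "Dc t \<le> D_max" "Dd t \<le> D_max"
  using relaxation_bounded[OF parallel_sums_relax(1) t] relaxation_bounded[OF parallel_sums_relax(2) t]
    D_pos[of t] t unfolding D_max_def by auto

(* The mirror symmetry of the Wheatstone graph exchanging a with b and c with d
   (and l with r) reverses the bridge drop. *)
lemma mirror:
  "wheatstone_dynamics Lb La Ld Lc Db Da Dd Dc ub ua ud uc (\<lambda>t. - ue t) P w"
proof unfold_locales
  fix t :: real assume t: "0 < t"
  show "Db t * ub t / Lb + Da t * ua t / La = 1" using flow_in[OF t] by simp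
  show "Dd t * ud t / Ld + Dc t * uc t / Lc = 1" using flow_out[OF t] by simp
  show "Db t * (ub t)\<^sup>2 / Lb + Da t * (ua t)\<^sup>2 / La + Dd t * (ud t)\<^sup>2 / Ld + Dc t * (uc t)\<^sup>2 / Lc \<le> P t"
    using energy[OF t] by (simp add: ac_simps)
  show "- ue t = ub t - ua t" using ue_eq[OF t] by simp
  show "- ue t = P t * (Da t / La * (Dd t / Ld) - Db t / Lb * (Dc t / Lc)) * w t"
    using ue_formula[OF t] by (simp add: algebra_simps)
  show "w t * ((Da t / La + Dc t / Lc) * (Db t / Lb + Dd t / Ld)) \<le> 1"
    using w_bound[OF t] by (simp add: ac_simps)
qed (use L_pos D_pos u_pos P_ac P_bd w_pos growth_a growth_b growth_c growth_d in simp_all)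

end

locale wheatstone_dynamics_ac = wheatstone_dynamics +
  assumes ac_shorter: "La < Lb" "Lc < Ld"
begin

definition margin :: real where
  "margin = min (Lb - La) (Ld - Lc)"

lemma margin_pos: "0 < margin"
  unfolding margin_def using ac_shorter by simp

definition lyap :: "real \<Rightarrow> real" where
  "lyap t = La * Da t + Lb * Db t + Lc * Dc t + Ld * Dd t - La * ln (Da t) - Lc * ln (Dc t)
            + margin * (Db t + Dd t)"

definition lyap_rate :: "real \<Rightarrow> real" where
  "lyap_rate t = La * (Da t * (ua t / La - 1)) + Lb * (Db t * (ub t / Lb - 1))
      + Lc * (Dc t * (uc t / Lc - 1)) + Ld * (Dd t * (ud t / Ld - 1))
      - La * (ua t / La - 1) - Lc * (uc t / Lc - 1)
      + margin * (Db t * (ub t / Lb - 1) + Dd t * (ud t / Ld - 1))"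

lemma lyap_der:
  assumes t: "0 < t" shows "(lyap has_real_derivative lyap_rate t) (at t)"
  unfolding lyap_def[abs_def] lyap_rate_def
  by (intro DERIV_add DERIV_diff DERIV_cmult DERIV_ln_of_rate
      growth_a growth_b growth_c growth_d D_pos t)

(* The Lyapunov function decreases at least at the rate margin * (Db + Dd):
   by AM-GM and the energy bound the flow terms cost at most the total drop, and
   the currents through b and d are paid for by the longer lengths Lb and Ld. *)
lemma lyap_dissipation:
  assumes t: "0 < t" shows "lyap_rate t \<le> - margin * (Db t + Dd t)"
proof -
  define S where "S = Da t * ua t + Db t * ub t + Dc t * uc t + Dd t * ud t"
  define V where "V = La * Da t + Lb * Db t + Lc * Dc t + Ld * Dd t"
  define E where "E = Da t * (ua t)\<^sup>2 / La + Db t * (ub t)\<^sup>2 / Lb + Dc t * (uc t)\<^sup>2 / Lc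
    + Dd t * (ud t)\<^sup>2 / Ld"
  define qb where "qb = Db t * ub t / Lb"
  define qd where "qd = Dd t * ud t / Ld"
  note D = D_pos[OF t] and u = u_pos[OF t]
  have rate: "lyap_rate t = S - V - (ua t + uc t) + La + Lc + margin * qb + margin * qd
      - margin * (Db t + Dd t)"
    unfolding lyap_rate_def S_def V_def qb_def qd_def using L_pos by (simp add: field_simps)
  have amgm: "2 * S \<le> V + E"
    using weighted_amgm[OF L_pos(1), of "Da t" "ua t"] weighted_amgm[OF L_pos(2), of "Db t" "ub t"]
      weighted_amgm[OF L_pos(3), of "Dc t" "uc t"] weighted_amgm[OF L_pos(4), of "Dd t" "ud t"] D
    unfolding S_def V_def E_def by simp
  have E_le: "E \<le> ua t + uc t" unfolding E_def using energy[OF t] P_ac[OF t] by simp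
  have "Da t * ua t = La * (1 - qb)" "Dc t * uc t = Lc * (1 - qd)"
    using flow_in[OF t] flow_out[OF t] L_pos unfolding qb_def qd_def by (simp_all add: field_simps)
  moreover have "Db t * ub t = Lb * qb" "Dd t * ud t = Ld * qd"
    unfolding qb_def qd_def using L_pos by simp_all
  ultimately have S_eq: "S = La + Lc + (Lb - La) * qb + (Ld - Lc) * qd"
    unfolding S_def by (simp add: algebra_simps)
  have "0 \<le> qb" "0 \<le> qd" unfolding qb_def qd_def using D u L_pos by simp_all
  then have "margin * qb \<le> (Lb - La) * qb" "margin * qd \<le> (Ld - Lc) * qd"
    by (auto intro: mult_right_mono simp: margin_def)
  then show ?thesis using rate amgm E_le S_eq by linarith
qed

lemma lyap_antimono:
  assumes "1 \<le> s" "s \<le> t" shows "lyap t \<le> lyap s"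
proof (rule deriv_nonpos_imp_antimono[of s t lyap lyap_rate])
  fix x assume x: "x \<in> {s..t}"
  then have x0: "0 < x" using assms by simp
  show "(lyap has_real_derivative lyap_rate x) (at x)" by (rule lyap_der[OF x0])
  have "0 \<le> margin * (Db x + Dd x)" using margin_pos D_pos[OF x0] by simp
  then show "lyap_rate x \<le> 0" using lyap_dissipation[OF x0] by linarith
qed (use assms in simp)

lemma lyap_lower_bound:
  assumes t: "1 \<le> t" shows "- La * ln D_max - Lc * ln D_max \<le> lyap t"
proof -
  have t0: "0 < t" using t by simp
  note D = D_pos[OF t0]
  have "ln (Da t) \<le> ln D_max" "ln (Dc t) \<le> ln D_max" using D_le_D_max[OF t] D by simp_all
  then have "La * ln (Da t) \<le> La * ln D_max" "Lc * ln (Dc t) \<le> Lc * ln D_max"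
    using L_pos by simp_all
  moreover have "0 \<le> La * Da t + Lb * Db t + Lc * Dc t + Ld * Dd t" "0 \<le> margin * (Db t + Dd t)"
    using D L_pos margin_pos by simp_all
  ultimately show ?thesis unfolding lyap_def by linarith
qed

(* Db + Dd decays at most at unit exponential rate, since (Db + Dd)' >= -(Db + Dd). *)
lemma bd_decay_slowly:
  assumes "1 \<le> t" "t \<le> s" shows "exp (t - s) * (Db t + Dd t) \<le> Db s + Dd s"
proof -
  have "exp t * (Db t + Dd t) \<le> exp s * (Db s + Dd s)"
  proof (rule deriv_nonneg_imp_mono[of t s _
        "\<lambda>x. exp x * (Db x + Dd x) + (Db x * (ub x / Lb - 1) + Dd x * (ud x / Ld - 1)) * exp x"])
    fix x assume x: "x \<in> {t..s}"
    then have x0: "0 < x" using assms by simp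
    show "((\<lambda>x. exp x * (Db x + Dd x)) has_real_derivative
       exp x * (Db x + Dd x) + (Db x * (ub x / Lb - 1) + Dd x * (ud x / Ld - 1)) * exp x) (at x)"
      by (intro DERIV_mult DERIV_exp DERIV_add growth_b growth_d x0)
    have "0 \<le> exp x * (Db x * ub x / Lb + Dd x * ud x / Ld)"
      using D_pos[OF x0] u_pos[OF x0] L_pos by simp
    then show "0 \<le> exp x * (Db x + Dd x) + (Db x * (ub x / Lb - 1) + Dd x * (ud x / Ld - 1)) * exp x"
      by (simp add: algebra_simps)
  qed (use assms in simp)
  then show ?thesis by (simp add: exp_diff field_simps)
qed

lemma lyap_drop:
  assumes t: "1 \<le> t" and eta: "0 < eta" "eta \<le> Db t + Dd t"
  shows "lyap (t + 1/2) \<le> lyap t - margin * eta / 4"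
proof -
  have bd_low: "eta / 2 \<le> Db s + Dd s" if s: "t \<le> s" "s \<le> t + 1/2" for s
  proof -
    have "1/2 \<le> exp (- 1/2 :: real)" using exp_ge_add_one_self[of "- 1/2 :: real"] by simp
    also have "\<dots> \<le> exp (t - s)" using s by simp
    finally have "1/2 * eta \<le> exp (t - s) * (Db t + Dd t)"
      using eta by (intro mult_mono) auto
    then show ?thesis using bd_decay_slowly[OF t s(1)] by simp
  qed
  have "lyap (t + 1/2) + margin * eta / 2 * (t + 1/2) \<le> lyap t + margin * eta / 2 * t"
  proof (rule deriv_nonpos_imp_antimono[of t "t + 1/2" "\<lambda>u. lyap u + margin * eta / 2 * u"
        "\<lambda>u. lyap_rate u + margin * eta / 2 * 1"])
    fix x assume x: "x \<in> {t..t + 1/2}"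
    then have x0: "0 < x" using t by simp
    show "((\<lambda>u. lyap u + margin * eta / 2 * u) has_real_derivative lyap_rate x + margin * eta / 2 * 1) (at x)"
      by (intro DERIV_add lyap_der x0 DERIV_cmult DERIV_ident)
    have "margin * (eta / 2) \<le> margin * (Db x + Dd x)"
      using bd_low[of x] x margin_pos by (intro mult_left_mono) auto
    then show "lyap_rate x + margin * eta / 2 * 1 \<le> 0" using lyap_dissipation[OF x0] by simp
  qed simp
  moreover have "margin * eta / 2 * (t + 1/2) = margin * eta / 2 * t + margin * eta / 4"
    by (simp add: algebra_simps)
  ultimately show ?thesis by linarith
qed

lemma lyap_descends:
  assumes eta: "0 < eta" and recurrent: "\<And>T. \<exists>t\<ge>T. eta \<le> Db t + Dd t"
  shows "\<exists>t\<ge>1. lyap t \<le> lyap 1 - real n * (margin * eta / 4)"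
proof (induction n)
  case 0
  then show ?case by (intro exI[of _ 1]) simp
next
  case (Suc n)
  then obtain t where t: "1 \<le> t" "lyap t \<le> lyap 1 - real n * (margin * eta / 4)" by blast
  obtain t' where t': "t \<le> t'" "eta \<le> Db t' + Dd t'" using recurrent by blast
  have "lyap (t' + 1/2) \<le> lyap t' - margin * eta / 4"
    using t t' by (intro lyap_drop eta) auto
  moreover have "lyap t' \<le> lyap t" by (rule lyap_antimono[OF t(1) t'(1)])
  moreover have "real (Suc n) * (margin * eta / 4) = real n * (margin * eta / 4) + margin * eta / 4"
    by (simp add: algebra_simps)
  ultimately have "lyap (t' + 1/2) \<le> lyap 1 - real (Suc n) * (margin * eta / 4)"
    using t(2) by linarith
  moreover have "1 \<le> t' + 1/2" using t t' by simp
  ultimately show ?case by blast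
qed

lemma bd_tendsto_zero: "((\<lambda>t. Db t + Dd t) \<longlongrightarrow> 0) at_top"
proof (rule ccontr)
  assume "\<not> ?thesis"
  then obtain eta where eta: "0 < eta" and far: "\<not> (\<forall>\<^sub>F t in at_top. dist (Db t + Dd t) 0 < eta)"
    unfolding tendsto_iff by blast
  have "\<exists>t\<ge>T. eta \<le> Db t + Dd t" for T
  proof -
    have "\<not> (\<forall>t\<ge>max T 1. \<bar>Db t + Dd t - 0\<bar> < eta)"
      using far unfolding eventually_at_top_linorder dist_real_def by blast
    then obtain t where t: "max T 1 \<le> t" "eta \<le> \<bar>Db t + Dd t\<bar>" by (auto simp: not_less)
    then have "0 < Db t" "0 < Dd t" using D_pos[of t] by auto
    then show ?thesis using t by (intro exI[of _ t]) auto
  qed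
  note descends = lyap_descends[OF eta this]
  obtain n :: nat where n: "lyap 1 - (- La * ln D_max - Lc * ln D_max) < real n * (margin * eta / 4)"
    using ex_less_of_nat_mult[of "margin * eta / 4"] margin_pos eta by (meson divide_pos_pos mult_pos_pos zero_less_numeral)
  obtain t where "1 \<le> t" "lyap t \<le> lyap 1 - real n * (margin * eta / 4)"
    using descends by blast
  then show False using lyap_lower_bound n by fastforce
qed

lemma diameters_limit:
  shows "(Da \<longlongrightarrow> 1) at_top" "(Db \<longlongrightarrow> 0) at_top" "(Dc \<longlongrightarrow> 1) at_top" "(Dd \<longlongrightarrow> 0) at_top"
proof -
  have le: "\<forall>\<^sub>F t in at_top. norm (Db t) \<le> Db t + Dd t \<and> norm (Dd t) \<le> Db t + Dd t"
    using eventually_gt_at_top[of 0]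
  proof eventually_elim
    case (elim t)
    then have "0 < Db t" "0 < Dd t" using D_pos by auto
    then show ?case by simp
  qed
  show b: "(Db \<longlongrightarrow> 0) at_top" "(Dd \<longlongrightarrow> 0) at_top"
    by (rule Lim_null_comparison[OF eventually_mono[OF le] bd_tendsto_zero], simp)+
  have "((\<lambda>t. (Da t + Db t) - Db t) \<longlongrightarrow> 1 - 0) at_top"
    by (intro tendsto_diff relaxation_tendsto b parallel_sums_relax)
  then show "(Da \<longlongrightarrow> 1) at_top" by simp
  have "((\<lambda>t. (Dc t + Dd t) - Dd t) \<longlongrightarrow> 1 - 0) at_top"
    by (intro tendsto_diff relaxation_tendsto b parallel_sums_relax)
  then show "(Dc \<longlongrightarrow> 1) at_top" by simp
qed

end

context wheatstone_dynamics
begin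

(* For balanced lengths La * Ld = Lb * Lc the quantity "balance" changes exactly
   against the bridge drop; it differs from phi by a term that depends on Da, Dc only. *)
definition balance :: "real \<Rightarrow> real" where
  "balance t = ln (Db t) - ln (Dd t) - (La / Lb) * (ln (Da t) - ln (Dc t))"

definition balance_rate :: real where
  "balance_rate = (1 / Lb) * (1 + La / Lc)"

lemma balance_der:
  assumes balanced: "La * Ld = Lb * Lc" and t: "0 < t"
  shows "(balance has_real_derivative - balance_rate * ue t) (at t)"
proof -
  have "(balance has_real_derivative
      (ub t / Lb - 1) - (ud t / Ld - 1) - (La / Lb) * ((ua t / La - 1) - (uc t / Lc - 1))) (at t)"
    unfolding balance_def[abs_def]
    by (intro DERIV_diff DERIV_cmult DERIV_ln_of_rate growth_a growth_b growth_c growth_d D_pos t)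
  moreover have "(ub t / Lb - 1) - (ud t / Ld - 1) - (La / Lb) * ((ua t / La - 1) - (uc t / Lc - 1))
      = - balance_rate * ue t"
  proof -
    have Ld: "Ld = Lb * Lc / La" using balanced L_pos by (simp add: field_simps)
    have ud: "ud t = uc t + ua t - ub t" using P_ac[OF t] P_bd[OF t] by simp
    show ?thesis unfolding balance_rate_def Ld ud ue_eq[OF t] using L_pos by (simp add: field_simps)
  qed
  ultimately show ?thesis by simp
qed

lemma phi_via_balance:
  assumes balanced: "La * Ld = Lb * Lc" and t: "0 < t"
  shows "phi t = balance t - (1 - La / Lb) * (ln (Da t) - ln (Dc t))"
proof -
  have "ln La + ln Ld = ln Lb + ln Lc" using balanced L_pos by (metis ln_mult_pos)
  then show ?thesis unfolding phi_def balance_def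
    using D_pos[OF t] L_pos by (simp add: ln_div algebra_simps)
qed

end

context wheatstone_dynamics_ac
begin

(* Since b and d vanish, the value of phi_rate at zeros of phi converges to
   La/Lb - Lc/Ld. *)
lemma phi_rate_at_zero_tendsto:
  "((\<lambda>t. (1/Lb - 1/La) / (Da t / La + Db t / Lb) + (1/Lc - 1/Ld) / (Dc t / Lc + Dd t / Ld))
     \<longlongrightarrow> La / Lb - Lc / Ld) at_top"
proof -
  have "((\<lambda>t. (1/Lb - 1/La) / (Da t / La + Db t / Lb) + (1/Lc - 1/Ld) / (Dc t / Lc + Dd t / Ld))
     \<longlongrightarrow> (1/Lb - 1/La) / (1 / La + 0 / Lb) + (1/Lc - 1/Ld) / (1 / Lc + 0 / Ld)) at_top"
    using L_pos by (intro tendsto_intros diameters_limit) simp_all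
  moreover have "(1/Lb - 1/La) / (1 / La + 0 / Lb) + (1/Lc - 1/Ld) / (1 / Lc + 0 / Ld)
      = La / Lb - Lc / Ld"
    using L_pos by (simp add: field_simps)
  ultimately show ?thesis by simp
qed

lemma ue_eventually_signed_generic:
  assumes generic: "La / Lb \<noteq> Lc / Ld"
  shows "(\<forall>\<^sub>F t in at_top. ue t > 0) \<or> (\<forall>\<^sub>F t in at_top. ue t < 0)"
proof -
  define h where "h t = (1/Lb - 1/La) / (Da t / La + Db t / Lb) + (1/Lc - 1/Ld) / (Dc t / Lc + Dd t / Ld)"
    for t
  have "(h \<longlongrightarrow> La / Lb - Lc / Ld) at_top"
    unfolding h_def by (rule phi_rate_at_zero_tendsto)
  then have "(\<forall>\<^sub>F t in at_top. h t > 0) \<or> (\<forall>\<^sub>F t in at_top. h t < 0)"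
    using generic order_tendstoD[of h "La / Lb - Lc / Ld" at_top 0] by (cases "La / Lb - Lc / Ld > 0") auto
  then obtain N where "(\<forall>t\<ge>N. h t > 0) \<or> (\<forall>t\<ge>N. h t < 0)"
    unfolding eventually_at_top_linorder by blast
  then have "(\<forall>t\<ge>max N 1. phi t = 0 \<longrightarrow> phi_rate t < 0) \<or> (\<forall>t\<ge>max N 1. phi t = 0 \<longrightarrow> phi_rate t > 0)"
    using phi_rate_at_zero unfolding h_def by auto
  then show ?thesis by (rule ue_eventually_signed_if_crossing[rotated]) simp
qed

(* The total drop stays bounded: eventually Da, Dc > 1/2, and each carries at most the
   unit current. *)
lemma P_eventually_bounded: "\<forall>\<^sub>F t in at_top. P t \<le> 2 * (La + Lc)"
proof -
  have "\<forall>\<^sub>F t in at_top. 1/2 < Da t" "\<forall>\<^sub>F t in at_top. 1/2 < Dc t"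
    using order_tendstoD(1)[OF diameters_limit(1), of "1/2"]
      order_tendstoD(1)[OF diameters_limit(3), of "1/2"] by simp_all
  with eventually_gt_at_top[of 0] show ?thesis
  proof eventually_elim
    case (elim t)
    then have t: "0 < t" by simp
    have "ua t * (1/2) \<le> ua t * Da t" "uc t * (1/2) \<le> uc t * Dc t"
      using elim u_pos[OF t] by (auto intro: mult_left_mono)
    moreover have "Da t * ua t \<le> La" "Dc t * uc t \<le> Lc"
      using currents_le_one[OF t] L_pos by (simp_all add: field_simps)
    ultimately show ?case using P_ac[OF t] by (simp add: algebra_simps)
  qed
qed

lemma ue_tendsto_zero_if_phi:
  assumes "(phi \<longlongrightarrow> 0) at_top" shows "(ue \<longlongrightarrow> 0) at_top"
proof (rule Lim_null_comparison)
  show "\<forall>\<^sub>F t in at_top. norm (ue t) \<le> 2 * (La + Lc) * \<bar>exp (phi t) - 1\<bar>"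
    using P_eventually_bounded eventually_gt_at_top[of 0]
  proof eventually_elim
    case (elim t)
    have "\<bar>ue t\<bar> \<le> P t * \<bar>exp (phi t) - 1\<bar>" using ue_bound elim by simp
    also have "\<dots> \<le> 2 * (La + Lc) * \<bar>exp (phi t) - 1\<bar>" using elim by (intro mult_right_mono) auto
    finally show ?case by simp
  qed
  have "((\<lambda>t. 2 * (La + Lc) * \<bar>exp (phi t) - 1\<bar>) \<longlongrightarrow> 2 * (La + Lc) * \<bar>exp 0 - 1\<bar>) at_top"
    by (intro tendsto_intros assms)
  then show "((\<lambda>t. 2 * (La + Lc) * \<bar>exp (phi t) - 1\<bar>) \<longlongrightarrow> 0) at_top" by simp
qed

(* Balanced lengths: either phi eventually has a sign, or it changes sign at
   arbitrarily late times; then balance is pushed back to 0 from both sides, so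
   balance, phi and finally the bridge drop tend to 0. *)
lemma ue_stabilizes_balanced:
  assumes balanced: "La * Ld = Lb * Lc"
  shows "(\<forall>\<^sub>F t in at_top. ue t > 0) \<or> (\<forall>\<^sub>F t in at_top. ue t < 0) \<or> (ue \<longlongrightarrow> 0) at_top"
proof (cases "(\<forall>\<^sub>F t in at_top. phi t > 0) \<or> (\<forall>\<^sub>F t in at_top. phi t < 0)")
  case True
  then show ?thesis using ue_eventually_signed_if_phi by blast
next
  case False
  define corr where "corr t = (1 - La / Lb) * (ln (Da t) - ln (Dc t))" for t
  have phi_eq: "phi t = balance t - corr t" if "0 < t" for t
    unfolding corr_def by (rule phi_via_balance[OF balanced that])
  have "(corr \<longlongrightarrow> (1 - La / Lb) * (ln 1 - ln 1)) at_top"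
    unfolding corr_def[abs_def] by (intro tendsto_intros diameters_limit) simp_all
  then have corr_lim: "(corr \<longlongrightarrow> 0) at_top" by simp
  then have corr_small: "\<forall>\<^sub>F t in at_top. \<bar>corr t\<bar> < eta" if "0 < eta" for eta
    using that unfolding tendsto_iff dist_real_def by simp
  have rate_pos: "0 < balance_rate"
    unfolding balance_rate_def using L_pos by (intro mult_pos_pos add_pos_pos divide_pos_pos) auto
  have "(balance \<longlongrightarrow> 0) at_top"
  proof (rule tendsto_zero_if_pushed_back[of 1 _ "\<lambda>t. - balance_rate * ue t"])
    show "(balance has_real_derivative - balance_rate * ue t) (at t)" if "1 \<le> t" for t
      using balance_der[OF balanced] that by simp
  next
    fix eta :: real assume eta: "0 < eta"
    show "\<forall>\<^sub>F t in at_top.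
        (balance t = eta \<longrightarrow> - balance_rate * ue t < 0) \<and> (balance t = - eta \<longrightarrow> - balance_rate * ue t > 0)"
      using corr_small[OF eta] eventually_gt_at_top[of 0] by eventually_elim (use ue_sign phi_eq rate_pos in \<open>auto simp: mult_less_0_iff\<close>)
  next
    fix eta N :: real assume "0 < eta"
    from corr_small[OF this] obtain M where M: "\<And>t. M \<le> t \<Longrightarrow> \<bar>corr t\<bar> < eta"
      unfolding eventually_at_top_linorder by blast
    from False obtain t1 t2 where t1: "max (max N M) 1 \<le> t1" "phi t1 \<le> 0"
      and t2: "max (max N M) 1 \<le> t2" "0 \<le> phi t2"
      unfolding eventually_at_top_linorder by (meson not_le)
    show "\<exists>t\<ge>N. balance t \<le> eta"
      using t1 M[of t1] phi_eq[of t1] by (auto intro!: exI[of _ t1])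
    show "\<exists>t\<ge>N. - eta \<le> balance t"
      using t2 M[of t2] phi_eq[of t2] by (auto intro!: exI[of _ t2])
  qed
  then have "((\<lambda>t. balance t - corr t) \<longlongrightarrow> 0 - 0) at_top"
    by (intro tendsto_diff corr_lim)
  moreover have "\<forall>\<^sub>F t in at_top. balance t - corr t = phi t"
    using eventually_gt_at_top[of 0] by eventually_elim (simp add: phi_eq)
  ultimately have "(phi \<longlongrightarrow> 0) at_top" by (simp add: Lim_transform_eventually)
  then show ?thesis using ue_tendsto_zero_if_phi by blast
qed

lemma ue_stabilizes:
  "(\<forall>\<^sub>F t in at_top. ue t > 0) \<or> (\<forall>\<^sub>F t in at_top. ue t < 0) \<or> (ue \<longlongrightarrow> 0) at_top"
proof (cases "La / Lb = Lc / Ld")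
  case True
  then have "La * Ld = Lb * Lc" using L_pos by (simp add: field_simps)
  then show ?thesis by (rule ue_stabilizes_balanced)
qed (use ue_eventually_signed_generic in blast)

end

definition sign_stabilizes :: "(real \<Rightarrow> real) \<Rightarrow> bool" where
  "sign_stabilizes f \<longleftrightarrow>
     (\<forall>\<^sub>F t in at_top. f t > 0) \<or> (\<forall>\<^sub>F t in at_top. f t < 0) \<or> (f \<longlongrightarrow> 0) at_top"

lemma sign_stabilizes_uminus: "sign_stabilizes (\<lambda>t. - f t) \<longleftrightarrow> sign_stabilizes f"
  unfolding sign_stabilizes_def using tendsto_minus_cancel_left[of f 0 at_top] by auto

context wheatstone_dynamics
begin

lemma ue_stabilizes_if_ab_ordered:
  assumes "(La \<le> Lb \<and> Ld \<le> Lc \<and> (La < Lb \<or> Ld < Lc)) \<or> (La < Lb \<and> Lc < Ld)"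
  shows "sign_stabilizes ue"
  using assms
proof
  assume "La \<le> Lb \<and> Ld \<le> Lc \<and> (La < Lb \<or> Ld < Lc)"
  then show ?thesis
    unfolding sign_stabilizes_def using ue_eventually_signed_ad_shorter by blast
next
  assume "La < Lb \<and> Lc < Ld"
  then interpret wheatstone_dynamics_ac La Lb Lc Ld Da Db Dc Dd ua ub uc ud ue P w
    by unfold_locales auto
  show ?thesis unfolding sign_stabilizes_def by (rule ue_stabilizes)
qed

(* Unless the two sides of the bridge have equal lengths, the bridge stabilizes;
   the remaining length orders are reduced to the previous lemma by the mirror symmetry. *)
lemma ue_stabilizes_unless_tied:
  assumes "\<not> (La = Lb \<and> Lc = Ld)"
  shows "sign_stabilizes ue"
proof (cases "(La \<le> Lb \<and> Ld \<le> Lc \<and> (La < Lb \<or> Ld < Lc)) \<or> (La < Lb \<and> Lc < Ld)")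
  case True
  then show ?thesis by (rule ue_stabilizes_if_ab_ordered)
next
  case False
  then have "(Lb \<le> La \<and> Lc \<le> Ld \<and> (Lb < La \<or> Lc < Ld)) \<or> (Lb < La \<and> Ld < Lc)"
    using assms by auto
  then have "sign_stabilizes (\<lambda>t. - ue t)"
    by (rule wheatstone_dynamics.ue_stabilizes_if_ab_ordered[OF mirror])
  then show ?thesis by (simp add: sign_stabilizes_uminus)
qed

end

lemma unique_shortest_path_not_tied:
  assumes "unique_shortest_path L"
  shows "\<not> (L Ea = L Eb \<and> L Ec = L Ed)"
proof
  assume tie: "L Ea = L Eb \<and> L Ec = L Ed"
  obtain i where i: "i < 4" and shortest: "\<And>j. j < 4 \<Longrightarrow> j \<noteq> i \<Longrightarrow> path_lengths L ! i < path_lengths L ! j"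
  proof -
    have "length (path_lengths L) = 4" by (simp add: path_lengths_def)
    then show ?thesis using assms that unfolding unique_shortest_path_def by auto
  qed
  (* the tie swaps paths 0 and 1, and paths 2 and 3, without changing lengths *)
  define j where "j = (if i = 0 then 1 else if i = 1 then 0 else if i = 2 then 3 else (2::nat))"
  have "j < 4" "j \<noteq> i" "path_lengths L ! j = path_lengths L ! i"
    using i tie unfolding j_def path_lengths_def by (auto simp: less_Suc_eq numeral_eq_Suc)
  then show False using shortest by fastforce
qed

(* Diameters stay positive: D' = |Q| - D >= -D. *)
lemma physarum_diameters_pos:
  assumes D0: "\<forall>x\<in>wedges. 0 < D 0 x" and sol: "physarum_solution L D p"
    and x: "x \<in> wedges" and t: "0 \<le> t"
  shows "0 < D t x"
proof (rule positive_under_sourced_decay[where g = "\<lambda>s. \<bar>current L (D s) (p s) x\<bar>", OF _ _ _ t])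
  show "((\<lambda>s. D s x) has_real_derivative \<bar>current L (D s) (p s) x\<bar> - D s x) (at s within {0..})"
    if "0 \<le> s" for s
    using sol x that unfolding physarum_solution_def by blast
qed (use D0 x in auto)

lemma physarum_growth:
  assumes sol: "physarum_solution L D p" and x: "x \<in> wedges" and t: "0 < t"
    and L: "0 < L x" and D: "0 < D t x"
    and drop: "0 < p t (fst (ends x)) - p t (snd (ends x))"
  shows "((\<lambda>s. D s x) has_real_derivative
           D t x * ((p t (fst (ends x)) - p t (snd (ends x))) / L x - 1)) (at t)"
proof -
  have "((\<lambda>s. D s x) has_real_derivative \<bar>current L (D t) (p t) x\<bar> - D t x) (at t)"
    using sol x t unfolding physarum_solution_def by (intro DERIV_at_from_within_nonneg) auto
  moreover have "\<bar>current L (D t) (p t) x\<bar> = D t x / L x * (p t (fst (ends x)) - p t (snd (ends x)))"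
    unfolding current_conductance using L D drop by simp
  ultimately show ?thesis using L by (simp add: field_simps)
qed

lemma physarum_network:
  assumes L_pos: "\<forall>x\<in>wedges. 0 < L x" and D0: "\<forall>x\<in>wedges. 0 < D 0 x"
    and sol: "physarum_solution L D p" and t: "0 \<le> t"
  shows "0 < D t Ea / L Ea" "0 < D t Eb / L Eb" "0 < D t Ec / L Ec" "0 < D t Ed / L Ed"
    "0 < D t Ee / L Ee"
    and "D t Ea / L Ea * (p t S0 - p t Rv) + D t Eb / L Eb * (p t S0 - p t Lv) = 1"
    and "D t Ed / L Ed * (p t Lv - p t S1) + D t Ee / L Ee * (p t Lv - p t Rv)
           - D t Eb / L Eb * (p t S0 - p t Lv) = 0"
    and "D t Ec / L Ec * (p t Rv - p t S1) - D t Ea / L Ea * (p t S0 - p t Rv)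
           - D t Ee / L Ee * (p t Lv - p t Rv) = 0"
proof -
  have "0 < D t x / L x" if "x \<in> wedges" for x
    using physarum_diameters_pos[OF D0 sol that t] L_pos that by simp
  then show "0 < D t Ea / L Ea" "0 < D t Eb / L Eb" "0 < D t Ec / L Ec" "0 < D t Ed / L Ed"
    "0 < D t Ee / L Ee" by (simp_all add: wedges_def)
  have "kirchhoff L (D t) (p t)" using sol t unfolding physarum_solution_def by blast
  then show "D t Ea / L Ea * (p t S0 - p t Rv) + D t Eb / L Eb * (p t S0 - p t Lv) = 1"
    "D t Ed / L Ed * (p t Lv - p t S1) + D t Ee / L Ee * (p t Lv - p t Rv)
       - D t Eb / L Eb * (p t S0 - p t Lv) = 0"
    "D t Ec / L Ec * (p t Rv - p t S1) - D t Ea / L Ea * (p t S0 - p t Rv)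
       - D t Ee / L Ee * (p t Lv - p t Rv) = 0"
    by (rule kirchhoff_node_equations)+
qed

(* The outer drops are positive, so each outer diameter obeys D' = D * (u / L - 1). *)
lemma physarum_outer_growth:
  assumes L_pos: "\<forall>x\<in>wedges. 0 < L x" and D0: "\<forall>x\<in>wedges. 0 < D 0 x"
    and sol: "physarum_solution L D p" and t: "0 < t"
  shows "((\<lambda>s. D s Ea) has_real_derivative D t Ea * ((p t S0 - p t Rv) / L Ea - 1)) (at t)"
    "((\<lambda>s. D s Eb) has_real_derivative D t Eb * ((p t S0 - p t Lv) / L Eb - 1)) (at t)"
    "((\<lambda>s. D s Ec) has_real_derivative D t Ec * ((p t Rv - p t S1) / L Ec - 1)) (at t)"
    "((\<lambda>s. D s Ed) has_real_derivative D t Ed * ((p t Lv - p t S1) / L Ed - 1)) (at t)"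
proof -
  have in_wedges: "Ea \<in> wedges" "Eb \<in> wedges" "Ec \<in> wedges" "Ed \<in> wedges"
    by (simp_all add: wedges_def)
  note network = physarum_network[OF L_pos D0 sol less_imp_le[OF t]]
  note drops = wheatstone_drops_pos[OF network]
  have growth: "((\<lambda>s. D s x) has_real_derivative
      D t x * ((p t (fst (ends x)) - p t (snd (ends x))) / L x - 1)) (at t)"
    if "x \<in> wedges" "0 < p t (fst (ends x)) - p t (snd (ends x))" for x
    using physarum_growth[OF sol that(1) t _ _ that(2)] L_pos that(1)
      physarum_diameters_pos[OF D0 sol that(1) less_imp_le[OF t]] by blast
  show "((\<lambda>s. D s Ea) has_real_derivative D t Ea * ((p t S0 - p t Rv) / L Ea - 1)) (at t)"
    "((\<lambda>s. D s Eb) has_real_derivative D t Eb * ((p t S0 - p t Lv) / L Eb - 1)) (at t)"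
    "((\<lambda>s. D s Ec) has_real_derivative D t Ec * ((p t Rv - p t S1) / L Ec - 1)) (at t)"
    "((\<lambda>s. D s Ed) has_real_derivative D t Ed * ((p t Lv - p t S1) / L Ed - 1)) (at t)"
    using growth[OF in_wedges(1)] growth[OF in_wedges(2)] growth[OF in_wedges(3)]
      growth[OF in_wedges(4)] drops by simp_all
qed

lemma physarum_wheatstone_dynamics:
  assumes L_pos: "\<forall>x\<in>wedges. 0 < L x" and D0: "\<forall>x\<in>wedges. 0 < D 0 x"
    and sol: "physarum_solution L D p"
  shows "wheatstone_dynamics (L Ea) (L Eb) (L Ec) (L Ed)
    (\<lambda>t. D t Ea) (\<lambda>t. D t Eb) (\<lambda>t. D t Ec) (\<lambda>t. D t Ed)
    (\<lambda>t. p t S0 - p t Rv) (\<lambda>t. p t S0 - p t Lv) (\<lambda>t. p t Rv - p t S1) (\<lambda>t. p t Lv - p t S1)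
    (\<lambda>t. p t Lv - p t Rv) (\<lambda>t. p t S0 - p t S1)
    (\<lambda>t. 1 / wheatstone_det (D t Ea / L Ea) (D t Eb / L Eb) (D t Ec / L Ec) (D t Ed / L Ed) (D t Ee / L Ee))"
    (is "wheatstone_dynamics _ _ _ _ _ _ _ _ _ _ _ _ _ _ ?w")
proof unfold_locales
  fix t :: real assume t: "0 < t"
  note network = physarum_network[OF L_pos D0 sol less_imp_le[OF t]]
  note det = wheatstone_det_bound[OF network(1-5)]
  show "D t Ea * (p t S0 - p t Rv) / L Ea + D t Eb * (p t S0 - p t Lv) / L Eb = 1"
    using network(6) by simp
  show "D t Ec * (p t Rv - p t S1) / L Ec + D t Ed * (p t Lv - p t S1) / L Ed = 1"
    using wheatstone_sink[OF network] by simp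
  show "D t Ea * (p t S0 - p t Rv)\<^sup>2 / L Ea + D t Eb * (p t S0 - p t Lv)\<^sup>2 / L Eb
      + D t Ec * (p t Rv - p t S1)\<^sup>2 / L Ec + D t Ed * (p t Lv - p t S1)\<^sup>2 / L Ed \<le> p t S0 - p t S1"
    using wheatstone_energy[OF network] by simp
  show "0 < ?w t" using det(1) by simp
  show "p t Lv - p t Rv = (p t S0 - p t S1)
      * (D t Eb / L Eb * (D t Ec / L Ec) - D t Ea / L Ea * (D t Ed / L Ed)) * ?w t"
    using wheatstone_bridge[OF network] det(1) by (simp add: field_simps)
  show "?w t * ((D t Eb / L Eb + D t Ed / L Ed) * (D t Ea / L Ea + D t Ec / L Ec)) \<le> 1"
    using det by (simp add: field_simps)
  show "0 < p t S0 - p t Rv" "0 < p t S0 - p t Lv" "0 < p t Rv - p t S1" "0 < p t Lv - p t S1"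
    using wheatstone_drops_pos[OF network] by simp_all
  show "0 < D t Ea" "0 < D t Eb" "0 < D t Ec" "0 < D t Ed"
    using physarum_diameters_pos[OF D0 sol _ less_imp_le[OF t]] by (simp_all add: wedges_def)
qed (use L_pos physarum_outer_growth[OF L_pos D0 sol] in \<open>auto simp: wedges_def\<close>)

theorem mainTheorem15:
  fixes L :: "wedge \<Rightarrow> real"
    and D :: "real \<Rightarrow> wedge \<Rightarrow> real"
    and p :: "real \<Rightarrow> wvertex \<Rightarrow> real"
  assumes "\<forall>x\<in>wedges. L x > 0"
    and "\<forall>x\<in>wedges. D 0 x > 0"
    and "unique_shortest_path L"
    and "physarum_solution L D p"
  shows "\<forall>x\<in>wedges. becomes_horizontal p x \<or> becomes_directed p x"
proof -
  interpret wheatstone_dynamics "L Ea" "L Eb" "L Ec" "L Ed"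
    "\<lambda>t. D t Ea" "\<lambda>t. D t Eb" "\<lambda>t. D t Ec" "\<lambda>t. D t Ed"
    "\<lambda>t. p t S0 - p t Rv" "\<lambda>t. p t S0 - p t Lv" "\<lambda>t. p t Rv - p t S1" "\<lambda>t. p t Lv - p t S1"
    "\<lambda>t. p t Lv - p t Rv" "\<lambda>t. p t S0 - p t S1"
    "\<lambda>t. 1 / wheatstone_det (D t Ea / L Ea) (D t Eb / L Eb) (D t Ec / L Ec) (D t Ed / L Ed) (D t Ee / L Ee)"
    using physarum_wheatstone_dynamics[OF assms(1,2,4)] .
  have bridge: "sign_stabilizes (\<lambda>t. p t Lv - p t Rv)"
    using ue_stabilizes_unless_tied unique_shortest_path_not_tied[OF assms(3)] by blast
  have outer: "directed_from p S0 Rv" "directed_from p S0 Lv" "directed_from p Rv S1" "directed_from p Lv S1"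
    unfolding directed_from_def using u_pos
    by (auto intro!: eventually_mono[OF eventually_gt_at_top[of 0]])
  show ?thesis
    unfolding wedges_def becomes_directed_def becomes_horizontal_def
    using outer bridge tendsto_rabs_zero[of "\<lambda>t. p t Lv - p t Rv"]
    by (auto simp: sign_stabilizes_def directed_from_def)
qed

end
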